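(* In the setting below, the directed graph $\tilde H$ contains no red cycle and no blue cycle.
   Context: Setting: $G$ is a graph; $S_1,T_1,S_2,T_2\subseteq V(G)$ are pairwise disjoint sets of $k$ vertices each, all of degree $1$ in $G$, with $(S_1,T_1)$ and $(S_2,T_2)$ each routable in $G$ (i.e. connected by $k$ node-disjoint paths). $H$ is an $(S_1,T_1,S_2,T_2)$-minimal minor of $G$: a minor of $G$ containing the vertices of $S_1\cup T_1\cup S_2\cup T_2$ as vertices (each such $x$ corresponds to a branch set $\{x\}$), in which both pairs are routable, and such that for every edge $e$ of $H$, deleting $e$ or contracting $e$ destroys one of these properties. $\mathcal{R}$ is a set of $k$ node-disjoint paths routing $(S_1,T_1)$ in $H$ ("red paths") and $\mathcal{B}$ a set of $k$ node-disjoint paths routing $(S_2,T_2)$ in $H$ ("blue paths"). $\tilde H$ is the directed graph on $V(H)$ containing each edge of a red path, directed along the path from $S_1$ to $T_1$ (a red edge), and each edge of a blue path, directed along the path from $S_2$ to $T_2$ (a blue edge). A blue cycle is a simple directed cycle $C$ in $\tilde H$ that can be partitioned into consecutive edge-disjoint segments $\sigma_1,\dots,\sigma_{2r}$, $r>0$, where each $\sigma_{2i}$ consists of a single red edge and each $\sigma_{2i-1}$ is a nonempty path consisting only of blue edges. A red cycle is defined the same way with the roles of red and blue exchanged. *)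

theory Defs
  imports Main
begin

definition graph :: "'v set \<Rightarrow> 'v set set \<Rightarrow> bool" where
  "graph V E \<longleftrightarrow> finite V \<and> (\<forall>e\<in>E. card e = 2 \<and> e \<subseteq> V)"

definition degree :: "'v set set \<Rightarrow> 'v \<Rightarrow> nat" where
  "degree E x = card {e\<in>E. x \<in> e}"

definition is_path :: "'v set \<Rightarrow> 'v set set \<Rightarrow> 'v list \<Rightarrow> bool" where
  "is_path V E p \<longleftrightarrow> p \<noteq> [] \<and> distinct p \<and> set p \<subseteq> V \<and>
     (\<forall>i. Suc i < length p \<longrightarrow> {p!i, p!Suc i} \<in> E)"

definition routing :: "'v set \<Rightarrow> 'v set set \<Rightarrow> 'v set \<Rightarrow> 'v set \<Rightarrow> nat \<Rightarrow> 'v list set \<Rightarrow> bool" where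
  "routing V E S T k P \<longleftrightarrow> finite P \<and> card P = k \<and>
     (\<forall>p\<in>P. is_path V E p \<and> hd p \<in> S \<and> last p \<in> T) \<and>
     (\<forall>p\<in>P. \<forall>q\<in>P. p \<noteq> q \<longrightarrow> set p \<inter> set q = {})"

definition routable :: "'v set \<Rightarrow> 'v set set \<Rightarrow> 'v set \<Rightarrow> 'v set \<Rightarrow> nat \<Rightarrow> bool" where
  "routable V E S T k \<longleftrightarrow> (\<exists>P. routing V E S T k P)"

definition connected_set :: "'v set set \<Rightarrow> 'v set \<Rightarrow> bool" where
  "connected_set E X \<longleftrightarrow>
     (\<forall>u\<in>X. \<forall>v\<in>X. (u, v) \<in> {(a, b). {a, b} \<in> E \<and> a \<in> X \<and> b \<in> X}\<^sup>*)"

text \<open>(VH, EH) is a minor of (V, E) whose vertices are its branch sets: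
  nonempty, pairwise disjoint, connected vertex sets of G; every edge of H joins two
  distinct branch sets between which G has an edge.\<close>
definition minor_model :: "'v set \<Rightarrow> 'v set set \<Rightarrow> 'v set set \<Rightarrow> 'v set set set \<Rightarrow> bool" where
  "minor_model V E VH EH \<longleftrightarrow>
     (\<forall>X\<in>VH. X \<noteq> {} \<and> X \<subseteq> V \<and> connected_set E X) \<and>
     (\<forall>X\<in>VH. \<forall>Y\<in>VH. X \<noteq> Y \<longrightarrow> X \<inter> Y = {}) \<and>
     (\<forall>e\<in>EH. \<exists>X Y. e = {X, Y} \<and> X \<in> VH \<and> Y \<in> VH \<and> X \<noteq> Y \<and>
                    (\<exists>x\<in>X. \<exists>y\<in>Y. {x, y} \<in> E))"

definition good_minor ::
  "'v set \<Rightarrow> 'v set set \<Rightarrow> 'v set \<Rightarrow> 'v set \<Rightarrow> 'v set \<Rightarrow> 'v set \<Rightarrow> nat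
   \<Rightarrow> 'v set set \<Rightarrow> 'v set set set \<Rightarrow> bool" where
  "good_minor V E S1 T1 S2 T2 k VH EH \<longleftrightarrow>
     minor_model V E VH EH \<and>
     (\<forall>x \<in> S1 \<union> T1 \<union> S2 \<union> T2. {x} \<in> VH) \<and>
     routable VH EH ((\<lambda>x. {x}) ` S1) ((\<lambda>x. {x}) ` T1) k \<and>
     routable VH EH ((\<lambda>x. {x}) ` S2) ((\<lambda>x. {x}) ` T2) k"

definition delete_edge :: "'w set \<Rightarrow> 'w \<Rightarrow> 'w set" where
  "delete_edge EH e = EH - {e}"

definition contract_map :: "'v set \<Rightarrow> 'v set \<Rightarrow> 'v set \<Rightarrow> 'v set" where
  "contract_map X Y Z = (if Z = X \<or> Z = Y then X \<union> Y else Z)"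

definition contract_vertices :: "'v set set \<Rightarrow> 'v set \<Rightarrow> 'v set \<Rightarrow> 'v set set" where
  "contract_vertices VH X Y = contract_map X Y ` VH"

definition contract_edges :: "'v set set set \<Rightarrow> 'v set \<Rightarrow> 'v set \<Rightarrow> 'v set set set" where
  "contract_edges EH X Y =
     {contract_map X Y ` e | e. e \<in> EH \<and> card (contract_map X Y ` e) = 2}"

definition minimal_minor ::
  "'v set \<Rightarrow> 'v set set \<Rightarrow> 'v set \<Rightarrow> 'v set \<Rightarrow> 'v set \<Rightarrow> 'v set \<Rightarrow> nat
   \<Rightarrow> 'v set set \<Rightarrow> 'v set set set \<Rightarrow> bool" where
  "minimal_minor V E S1 T1 S2 T2 k VH EH \<longleftrightarrow>
     good_minor V E S1 T1 S2 T2 k VH EH \<and>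
     (\<forall>X Y. {X, Y} \<in> EH \<longrightarrow>
        \<not> good_minor V E S1 T1 S2 T2 k VH (delete_edge EH {X, Y}) \<and>
        \<not> good_minor V E S1 T1 S2 T2 k (contract_vertices VH X Y) (contract_edges EH X Y))"

datatype colour = Red | Blue

text \<open>Arcs of H~: (tail, head, colour); each edge of a red (blue) path directed along the path.\<close>
definition path_arcs :: "colour \<Rightarrow> 'w list set \<Rightarrow> ('w \<times> 'w \<times> colour) set" where
  "path_arcs c P = {(p!i, p!Suc i, c) | p i. p \<in> P \<and> Suc i < length p}"

definition tilde_arcs :: "'w list set \<Rightarrow> 'w list set \<Rightarrow> ('w \<times> 'w \<times> colour) set" where
  "tilde_arcs R B = path_arcs Red R \<union> path_arcs Blue B"

definition arc_tail :: "'w \<times> 'w \<times> colour \<Rightarrow> 'w" where "arc_tail a = fst a"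
definition arc_head :: "'w \<times> 'w \<times> colour \<Rightarrow> 'w" where "arc_head a = fst (snd a)"
definition arc_col :: "'w \<times> 'w \<times> colour \<Rightarrow> colour" where "arc_col a = snd (snd a)"

definition simple_dcycle :: "('w \<times> 'w \<times> colour) set \<Rightarrow> ('w \<times> 'w \<times> colour) list \<Rightarrow> bool" where
  "simple_dcycle A cs \<longleftrightarrow> cs \<noteq> [] \<and> set cs \<subseteq> A \<and> distinct (map arc_tail cs) \<and>
     (\<forall>i<length cs. arc_head (cs!i) = arc_tail (cs ! ((Suc i) mod length cs)))"

text \<open>A cycle partitioned into consecutive segments sigma_1,...,sigma_2r (r > 0), where the
  even-numbered segments are single arcs of colour c1 and the odd-numbered ones are nonempty
  paths of arcs of colour c2. Blue cycle: c1 = Red, c2 = Blue; red cycle: vice versa.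
  (List index j corresponds to segment sigma_(j+1).)\<close>
definition alt_cycle :: "colour \<Rightarrow> colour \<Rightarrow> ('w \<times> 'w \<times> colour) set \<Rightarrow> ('w \<times> 'w \<times> colour) list \<Rightarrow> bool" where
  "alt_cycle c1 c2 A C \<longleftrightarrow> simple_dcycle A C \<and>
     (\<exists>segs r. r > 0 \<and> length segs = 2 * r \<and> C = concat segs \<and>
        (\<forall>j<2 * r. if even j then segs!j \<noteq> [] \<and> (\<forall>a\<in>set (segs!j). arc_col a = c2)
                   else (\<exists>a. segs!j = [a] \<and> arc_col a = c1)))"

definition blue_cycle :: "('w \<times> 'w \<times> colour) set \<Rightarrow> ('w \<times> 'w \<times> colour) list \<Rightarrow> bool" where
  "blue_cycle A C \<longleftrightarrow> alt_cycle Red Blue A C"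

definition red_cycle :: "('w \<times> 'w \<times> colour) set \<Rightarrow> ('w \<times> 'w \<times> colour) list \<Rightarrow> bool" where
  "red_cycle A C \<longleftrightarrow> alt_cycle Blue Red A C"

end

theory Submission
  imports Defs
begin

(*
  Both statements follow from the minimality of H.  No edge of H lies on a red and on a blue
  path: its ends are not terminals (a terminal has degree one in G, hence a single neighbour in H,
  so it can only be the end of a path), and contracting it would keep both pairs routable.

  Given, say, a red cycle, delete its red arcs from the red routing and add its blue arcs reversed.
  Every blue arc of the cycle is entered and left by red arcs of the cycle, so the new arc set is
  still a partial injection whose walks from the sources S1 end in T1; thus it routes (S1, T1).
  It avoids the first red arc of the cycle, which no blue path uses either, so that edge of H
  could be deleted.
*)

section \<open>Walks in a finite partial injection\<close>

definition succ_of :: "('w \<times> 'w) set \<Rightarrow> 'w \<Rightarrow> 'w" where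
  "succ_of A x = (THE y. (x, y) \<in> A)"

lemma succ_of_in:
  assumes "single_valued A" "x \<in> Domain A"
  shows "(x, succ_of A x) \<in> A"
proof -
  obtain y where "(x, y) \<in> A" using assms(2) by blast
  with assms(1) have "succ_of A x = y"
    unfolding succ_of_def by (auto dest: single_valuedD)
  with \<open>(x, y) \<in> A\<close> show ?thesis by simp
qed

lemma funpow_succ_of_cancel:
  assumes sv: "single_valued A" "single_valued (A\<inverse>)"
    and "\<forall>i<m. (succ_of A ^^ i) x \<in> Domain A" "\<forall>i<m. (succ_of A ^^ i) y \<in> Domain A"
    and "(succ_of A ^^ m) x = (succ_of A ^^ m) y"
  shows "x = y"
  using assms(3-)
proof (induction m)
  case (Suc m)
  have "((succ_of A ^^ m) x, (succ_of A ^^ Suc m) x) \<in> A"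
       "((succ_of A ^^ m) y, (succ_of A ^^ Suc m) y) \<in> A"
    using Suc.prems(1,2) by (auto intro: succ_of_in[OF sv(1)])
  with Suc.prems(3) sv(2) have "(succ_of A ^^ m) x = (succ_of A ^^ m) y"
    by (auto dest: single_valuedD)
  with Suc show ?case by simp
qed simp

lemma funpow_succ_of_meet:
  assumes sv: "single_valued A" "single_valued (A\<inverse>)"
    and src: "x \<notin> Range A" and ij: "i \<le> j"
    and dx: "\<forall>l<i. (succ_of A ^^ l) x \<in> Domain A"
    and dy: "\<forall>l<j. (succ_of A ^^ l) y \<in> Domain A"
    and eq: "(succ_of A ^^ i) x = (succ_of A ^^ j) y"
  shows "i = j \<and> x = y"
proof -
  let ?f = "succ_of A"
  define y' where "y' = (?f ^^ (j - i)) y"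
  have shift: "(?f ^^ l) y' = (?f ^^ (l + (j - i))) y" for l
    unfolding y'_def by (simp add: funpow_add)
  have "x = y'"
  proof (rule funpow_succ_of_cancel[OF sv _ _, of i])
    show "\<forall>l<i. (?f ^^ l) y' \<in> Domain A" using dy ij by (simp add: shift)
    show "(?f ^^ i) x = (?f ^^ i) y'" using eq ij by (simp add: shift)
  qed (use dx in simp)
  show ?thesis
  proof (cases "i = j")
    case False
    then obtain d where d: "j - i = Suc d" using ij by (metis Suc_diff_Suc le_neq_implies_less)
    then have "((?f ^^ d) y, y') \<in> A"
      unfolding y'_def using dy ij by (auto intro: succ_of_in[OF sv(1)])
    with src \<open>x = y'\<close> show ?thesis by blast
  qed (use \<open>x = y'\<close> y'_def in simp)
qed

lemma funpow_succ_of_exits: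
  assumes fin: "finite A" and sv: "single_valued A" "single_valued (A\<inverse>)"
    and src: "x \<notin> Range A"
  shows "\<exists>n. (succ_of A ^^ n) x \<notin> Domain A"
proof (rule ccontr)
  let ?f = "succ_of A"
  assume "\<not> ?thesis"
  then have dom: "(?f ^^ n) x \<in> Domain A" for n by blast
  have "(?f ^^ n) x \<in> insert x (Range A)" for n
    using succ_of_in[OF sv(1) dom] by (cases n) auto
  then have "finite (range (\<lambda>n. (?f ^^ n) x))"
    using fin by (meson finite_Range finite_insert finite_subset image_subsetI)
  moreover have "inj (\<lambda>n. (?f ^^ n) x)"
  proof (rule injI)
    fix i j assume "(?f ^^ i) x = (?f ^^ j) x"
    then show "i = j"
      using funpow_succ_of_meet[OF sv src, of i j x] funpow_succ_of_meet[OF sv src, of j i x] dom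
      by (cases "i \<le> j") auto
  qed
  ultimately show False using finite_imageD infinite_UNIV_nat by blast
qed

definition exit_time :: "('w \<times> 'w) set \<Rightarrow> 'w \<Rightarrow> nat" where
  "exit_time A x = (LEAST n. (succ_of A ^^ n) x \<notin> Domain A)"

definition walk_from :: "('w \<times> 'w) set \<Rightarrow> 'w \<Rightarrow> 'w list" where
  "walk_from A x = map (\<lambda>i. (succ_of A ^^ i) x) [0..<Suc (exit_time A x)]"

locale finite_partial_injection =
  fixes A :: "('w \<times> 'w) set"
  assumes finite: "finite A" and sv: "single_valued A" "single_valued (A\<inverse>)"
begin

lemma exit_time_Domain:
  assumes "x \<notin> Range A"
  shows "(succ_of A ^^ exit_time A x) x \<notin> Domain A"
    and "\<And>l. l < exit_time A x \<Longrightarrow> (succ_of A ^^ l) x \<in> Domain A"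
proof -
  obtain n where "(succ_of A ^^ n) x \<notin> Domain A" using funpow_succ_of_exits[OF finite sv assms] ..
  then show "(succ_of A ^^ exit_time A x) x \<notin> Domain A" unfolding exit_time_def by (rule LeastI)
  show "(succ_of A ^^ l) x \<in> Domain A" if "l < exit_time A x" for l
    using not_less_Least[OF that[unfolded exit_time_def]] by blast
qed

lemma length_walk_from [simp]: "length (walk_from A x) = Suc (exit_time A x)"
  unfolding walk_from_def by simp

lemma nth_walk_from: "i \<le> exit_time A x \<Longrightarrow> walk_from A x ! i = (succ_of A ^^ i) x"
  unfolding walk_from_def by (simp add: nth_map_upt less_Suc_eq_le del: upt_Suc)

lemma walk_from_not_Nil: "walk_from A x \<noteq> []"
  using length_walk_from by (metis list.size(3) nat.distinct(1))

lemma hd_walk_from [simp]: "hd (walk_from A x) = x"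
  using nth_walk_from[of 0 x] walk_from_not_Nil by (simp add: hd_conv_nth)

lemma last_walk_from: "last (walk_from A x) = (succ_of A ^^ exit_time A x) x"
  using nth_walk_from[of "exit_time A x" x] walk_from_not_Nil by (simp add: last_conv_nth)

lemma walk_from_step:
  assumes "x \<notin> Range A" "Suc i < length (walk_from A x)"
  shows "(walk_from A x ! i, walk_from A x ! Suc i) \<in> A"
  using assms succ_of_in[OF sv(1) exit_time_Domain(2)[OF assms(1), of i]] by (simp add: nth_walk_from)

lemma walk_from_meet:
  assumes "x \<notin> Range A" "y \<notin> Range A" "v \<in> set (walk_from A x)" "v \<in> set (walk_from A y)"
  shows "x = y"
proof -
  obtain i j where ij: "i \<le> exit_time A x" "j \<le> exit_time A y" "(succ_of A ^^ i) x = (succ_of A ^^ j) y"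
    using assms(3,4) by (auto simp: in_set_conv_nth nth_walk_from less_Suc_eq_le)
  then show ?thesis
    using funpow_succ_of_meet[OF sv assms(1), of i j y] funpow_succ_of_meet[OF sv assms(2), of j i x]
      exit_time_Domain(2)[OF assms(1)] exit_time_Domain(2)[OF assms(2)] by (cases "i \<le> j") auto
qed

lemma distinct_walk_from:
  assumes "x \<notin> Range A"
  shows "distinct (walk_from A x)"
proof (rule distinct_conv_nth[THEN iffD2], intro allI impI notI)
  fix i j assume "i < length (walk_from A x)" "j < length (walk_from A x)" "i \<noteq> j"
    and "walk_from A x ! i = walk_from A x ! j"
  then show False
    using funpow_succ_of_meet[OF sv assms, of i j x] funpow_succ_of_meet[OF sv assms, of j i x]
      exit_time_Domain(2)[OF assms] by (cases "i \<le> j") (auto simp: nth_walk_from)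
qed

text \<open>The injection may contain cycles, but walks from vertices without predecessor never enter them.\<close>
lemma routable_from_sources:
  assumes Z: "finite Z" "Z \<subseteq> S" "\<And>z. z \<in> Z \<Longrightarrow> z \<notin> Range A \<and> z \<in> Domain A"
    and sinks: "\<And>x. x \<in> Range A \<Longrightarrow> x \<notin> Domain A \<Longrightarrow> x \<in> T"
    and edges: "\<And>x y. (x, y) \<in> A \<Longrightarrow> {x, y} \<in> E \<and> x \<in> V \<and> y \<in> V"
  shows "routable V E S T (card Z)"
proof -
  have exit_time_pos: "exit_time A z \<noteq> 0" if "z \<in> Z" for z
    using exit_time_Domain(1) Z(3) that by fastforce
  have path: "is_path V E (walk_from A z)" if "z \<in> Z" for z
  proof -
    have steps: "{walk_from A z ! i, walk_from A z ! Suc i} \<in> E \<and> walk_from A z ! i \<in> V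
        \<and> walk_from A z ! Suc i \<in> V" if "Suc i < length (walk_from A z)" for i
      using edges walk_from_step Z(3) \<open>z \<in> Z\<close> that by blast
    have "set (walk_from A z) \<subseteq> V"
    proof
      fix v assume "v \<in> set (walk_from A z)"
      then obtain i where "i < length (walk_from A z)" "v = walk_from A z ! i"
        by (auto simp: in_set_conv_nth)
      then show "v \<in> V"
        using steps[of i] steps[of "i - 1"] exit_time_pos[OF \<open>z \<in> Z\<close>] by (cases i) auto
    qed
    then show ?thesis
      unfolding is_path_def using steps distinct_walk_from Z(3) \<open>z \<in> Z\<close>
      by (auto simp del: length_walk_from simp: walk_from_def)
  qed
  have last: "last (walk_from A z) \<in> T" if "z \<in> Z" for z
  proof -
    obtain m where "exit_time A z = Suc m" using exit_time_pos[OF \<open>z \<in> Z\<close>] not0_implies_Suc by blast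
    then have "(walk_from A z ! m, last (walk_from A z)) \<in> A"
      using walk_from_step[of z m] Z(3) \<open>z \<in> Z\<close> walk_from_not_Nil by (simp add: last_conv_nth)
    then show ?thesis
      using sinks exit_time_Domain(1) Z(3) \<open>z \<in> Z\<close> by (auto simp: last_walk_from)
  qed
  have inj: "inj_on (walk_from A) Z" by (metis hd_walk_from inj_onI)
  have disjoint: "set (walk_from A y) \<inter> set (walk_from A z) = {}"
    if "y \<in> Z" "z \<in> Z" "walk_from A y \<noteq> walk_from A z" for y z
    using walk_from_meet Z(3) that by blast
  have "routing V E S T (card Z) (walk_from A ` Z)"
    unfolding routing_def using path last Z disjoint card_image[OF inj] by auto
  then show ?thesis unfolding routable_def by blast
qed

end

section \<open>Steps of a routing\<close>

lemma is_path_iff_successively: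
  "is_path V E p \<longleftrightarrow> p \<noteq> [] \<and> distinct p \<and> set p \<subseteq> V \<and> successively (\<lambda>a b. {a, b} \<in> E) p"
  unfolding is_path_def successively_conv_nth by blast

definition path_steps :: "'w list set \<Rightarrow> ('w \<times> 'w) set" where
  "path_steps P = {(p ! i, p ! Suc i) | p i. p \<in> P \<and> Suc i < length p}"

lemma path_stepsI: "p \<in> P \<Longrightarrow> Suc i < length p \<Longrightarrow> (p ! i, p ! Suc i) \<in> path_steps P"
  unfolding path_steps_def by blast

lemma path_stepsE:
  assumes "(x, y) \<in> path_steps P"
  obtains p i where "p \<in> P" "Suc i < length p" "p ! i = x" "p ! Suc i = y"
  using assms unfolding path_steps_def by blast

lemma path_step_on_some_path:
  assumes "(x, y) \<in> path_steps P"
  shows "\<exists>p\<in>P. x \<in> set p \<and> y \<in> set p"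
  using assms by (elim path_stepsE) (metis Suc_lessD nth_mem)

definition arc_pair :: "'w \<times> 'w \<times> colour \<Rightarrow> 'w \<times> 'w" where
  "arc_pair a = (arc_tail a, arc_head a)"

lemma path_arcs_iff: "a \<in> path_arcs c P \<longleftrightarrow> arc_pair a \<in> path_steps P \<and> arc_col a = c"
  unfolding path_arcs_def path_steps_def arc_pair_def arc_tail_def arc_head_def arc_col_def
  by (cases a) auto

lemma routing_mono:
  assumes "routing V E S T k P" "\<And>x y. (x, y) \<in> path_steps P \<Longrightarrow> {x, y} \<in> E'"
  shows "routing V E' S T k P"
  using assms unfolding routing_def is_path_def by (blast intro: path_stepsI)

context
  fixes V E S T k P
  assumes R: "routing V E S T k P"
begin

lemma routing_path: "p \<in> P \<Longrightarrow> is_path V E p \<and> hd p \<in> S \<and> last p \<in> T"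
  using R unfolding routing_def by blast

lemma routing_path_distinct: "p \<in> P \<Longrightarrow> distinct p"
  using routing_path unfolding is_path_def by blast

lemma routing_path_not_Nil: "p \<in> P \<Longrightarrow> p \<noteq> []"
  using routing_path unfolding is_path_def by blast

lemma routing_same_path: "p \<in> P \<Longrightarrow> q \<in> P \<Longrightarrow> v \<in> set p \<Longrightarrow> v \<in> set q \<Longrightarrow> p = q"
  using R unfolding routing_def by blast

lemma path_step_on_path:
  assumes "(x, y) \<in> path_steps P" "p \<in> P" "x \<in> set p \<or> y \<in> set p"
  obtains i where "Suc i < length p" "p ! i = x" "p ! Suc i = y"
proof -
  obtain q i where q: "q \<in> P" "Suc i < length q" "q ! i = x" "q ! Suc i = y"
    using assms(1) by (rule path_stepsE)
  then have "q = p" using routing_same_path[OF q(1) assms(2)] assms(3) by (metis Suc_lessD nth_mem)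
  with q that show ?thesis by blast
qed

lemma single_valued_path_steps: "single_valued (path_steps P)"
proof (rule single_valuedI)
  fix x y z assume xy: "(x, y) \<in> path_steps P" and xz: "(x, z) \<in> path_steps P"
  obtain p i where p: "p \<in> P" "Suc i < length p" "p ! i = x" "p ! Suc i = y"
    using xy by (rule path_stepsE)
  obtain j where "Suc j < length p" "p ! j = x" "p ! Suc j = z"
    using path_step_on_path[OF xz p(1)] p by (metis Suc_lessD nth_mem)
  with p routing_path_distinct show "y = z" by (metis Suc_lessD nth_eq_iff_index_eq)
qed

lemma single_valued_converse_path_steps: "single_valued ((path_steps P)\<inverse>)"
proof (rule single_valuedI)
  fix x y z assume "(x, y) \<in> (path_steps P)\<inverse>" "(x, z) \<in> (path_steps P)\<inverse>"
  then have yx: "(y, x) \<in> path_steps P" and zx: "(z, x) \<in> path_steps P" by auto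
  obtain p i where p: "p \<in> P" "Suc i < length p" "p ! i = y" "p ! Suc i = x"
    using yx by (rule path_stepsE)
  obtain j where "Suc j < length p" "p ! j = z" "p ! Suc j = x"
    using path_step_on_path[OF zx p(1)] p by (metis nth_mem)
  with p routing_path_distinct show "y = z" by (metis Suc_inject nth_eq_iff_index_eq)
qed

lemma path_steps_asym: "(x, y) \<in> path_steps P \<Longrightarrow> (y, x) \<notin> path_steps P"
proof
  assume xy: "(x, y) \<in> path_steps P" and yx: "(y, x) \<in> path_steps P"
  obtain p i where p: "p \<in> P" "Suc i < length p" "p ! i = x" "p ! Suc i = y"
    using xy by (rule path_stepsE)
  obtain j where "Suc j < length p" "p ! j = y" "p ! Suc j = x"
    using path_step_on_path[OF yx p(1)] p by (metis Suc_lessD nth_mem)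
  with p routing_path_distinct have "Suc i = j" "i = Suc j"
    by (metis Suc_lessD nth_eq_iff_index_eq)+
  then show False by simp
qed

lemma path_step_edge:
  assumes "(x, y) \<in> path_steps P"
  shows "{x, y} \<in> E \<and> x \<in> V \<and> y \<in> V"
proof -
  obtain p i where "p \<in> P" "Suc i < length p" "p ! i = x" "p ! Suc i = y"
    using assms by (rule path_stepsE)
  then show ?thesis using routing_path unfolding is_path_def by (metis Suc_lessD nth_mem subsetD)
qed

lemma finite_path_steps: "finite (path_steps P)"
proof -
  have "finite P" using R unfolding routing_def by simp
  moreover have "path_steps P \<subseteq> (\<Union>p\<in>P. set p) \<times> (\<Union>p\<in>P. set p)"
    unfolding path_steps_def by (auto intro!: nth_mem)
  ultimately show ?thesis by (meson finite_SigmaI finite_UN_I finite_set finite_subset)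
qed

lemma hd_notin_Range_path_steps:
  assumes p: "p \<in> P"
  shows "hd p \<notin> Range (path_steps P)"
proof
  assume "hd p \<in> Range (path_steps P)"
  then obtain w where w: "(w, hd p) \<in> path_steps P" by blast
  have "hd p \<in> set p" using routing_path_not_Nil[OF p] by simp
  then obtain i where i: "Suc i < length p" "p ! Suc i = hd p"
    using path_step_on_path[OF w p] by blast
  then have "p ! Suc i = p ! 0" using routing_path_not_Nil[OF p] by (simp add: hd_conv_nth)
  moreover have "0 < length p" using i(1) by auto
  ultimately show False using nth_eq_iff_index_eq[OF routing_path_distinct[OF p] i(1)] by blast
qed

lemma hd_in_Domain_path_steps:
  assumes "S \<inter> T = {}" and p: "p \<in> P"
  shows "hd p \<in> Domain (path_steps P)"
proof -
  obtain a xs where axs: "p = a # xs" using routing_path_not_Nil[OF p] by (cases p) auto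
  have "hd p \<in> S" "last p \<in> T" using routing_path[OF p] by auto
  then have "hd p \<noteq> last p" using assms(1) by auto
  then have "xs \<noteq> []" using axs by auto
  then have "(p ! 0, p ! Suc 0) \<in> path_steps P" using path_stepsI[OF p, of 0] axs by simp
  then show ?thesis using axs by auto
qed

lemma endpoint_of_path_steps:
  assumes "x \<in> Range (path_steps P)" "x \<notin> Domain (path_steps P)"
  shows "x \<in> T"
proof -
  obtain p i where p: "p \<in> P" "Suc i < length p" "p ! Suc i = x"
    using assms(1) by (auto elim: path_stepsE)
  have "\<not> Suc (Suc i) < length p"
    using path_stepsI[OF p(1), of "Suc i"] p(3) assms(2) by blast
  then have "length p = Suc (Suc i)" "p \<noteq> []" using p(2) by auto
  then have "x = last p" using p(3) by (simp add: last_conv_nth)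
  then show ?thesis using routing_path[OF p(1)] by simp
qed

lemma routing_exchange_path:
  assumes p0: "p0 \<in> P" and p: "is_path V' E' p" "hd p \<in> S" "last p \<in> T"
    and new: "set p \<subseteq> insert z (set p0)" "z \<in> set p" "\<And>q. q \<in> P \<Longrightarrow> z \<notin> set q"
    and others: "\<And>q. q \<in> P \<Longrightarrow> q \<noteq> p0 \<Longrightarrow> is_path V' E' q"
  shows "routing V' E' S T k (insert p (P - {p0}))"
  unfolding routing_def
proof (intro conjI; (intro ballI impI)?)
  have "p \<notin> P" using new(2,3) by blast
  moreover have "finite P" "card P = k" using R unfolding routing_def by auto
  moreover have "card P > 0" using calculation(2) p0 card_gt_0_iff by blast
  ultimately show "finite (insert p (P - {p0}))" "card (insert p (P - {p0})) = k"
    using p0 by auto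
  show "is_path V' E' q \<and> hd q \<in> S \<and> last q \<in> T" if "q \<in> insert p (P - {p0})" for q
    using that p others routing_path by blast
  show "set q \<inter> set r = {}" if "q \<in> insert p (P - {p0})" "r \<in> insert p (P - {p0})" "q \<noteq> r" for q r
    using that new(1,3) routing_same_path[OF _ p0] R unfolding routing_def by blast
qed

lemma card_hd_routing: "card (hd ` P) = k"
proof -
  have "inj_on hd P"
  proof (rule inj_onI)
    fix p q assume "p \<in> P" "q \<in> P" "hd p = hd q"
    then show "p = q"
      using routing_same_path[of p q "hd p"] routing_path_not_Nil by (metis list.set_sel(1))
  qed
  then show ?thesis using card_image R unfolding routing_def by metis
qed

end

section \<open>Rerouting along a cycle\<close>

definition rerouted_steps :: "'w list set \<Rightarrow> ('w \<times> 'w) set \<Rightarrow> ('w \<times> 'w) set \<Rightarrow> ('w \<times> 'w) set" where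
  "rerouted_steps P M N = (path_steps P - M) \<union> N\<inverse>"

text \<open>M \<union> N are the arcs of a simple cycle: M the ones along P, N the single arcs between them.\<close>

context
  fixes V E S T k P and M N :: "('w \<times> 'w) set"
  assumes R: "routing V E S T k P" and ST: "S \<inter> T = {}"
    and M: "M \<subseteq> path_steps P" and MN: "M \<inter> N = {}"
    and cycle: "single_valued (M \<union> N)" "single_valued ((M \<union> N)\<inverse>)"
      "Domain (M \<union> N) \<subseteq> Range (M \<union> N)"
    and flank: "\<And>u v. (u, v) \<in> N \<Longrightarrow> u \<in> Range M \<and> v \<in> Domain M"
begin

lemma single_valued_rerouted_steps: "single_valued (rerouted_steps P M N)"
  unfolding rerouted_steps_def
proof (rule single_valuedI)
  have mixed: False if yx: "(y, x) \<in> N" and xz: "(x, z) \<in> path_steps P - M" for x y z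
  proof -
    obtain w where "(x, w) \<in> M" using flank[OF yx] by blast
    then have "z = w" using M xz single_valued_path_steps[OF R] by (auto dest: single_valuedD)
    then show False using \<open>(x, w) \<in> M\<close> xz by blast
  qed
  fix x y z assume "(x, y) \<in> (path_steps P - M) \<union> N\<inverse>" "(x, z) \<in> (path_steps P - M) \<union> N\<inverse>"
  then show "y = z"
    using mixed single_valued_path_steps[OF R] cycle(2) by (auto dest: single_valuedD)
qed

lemma single_valued_converse_rerouted_steps: "single_valued ((rerouted_steps P M N)\<inverse>)"
  unfolding rerouted_steps_def
proof (rule single_valuedI)
  have mixed: False if zx: "(z, x) \<in> N" and yz: "(y, z) \<in> path_steps P - M" for x y z
  proof -
    obtain w where "(w, z) \<in> M" using flank[OF zx] by blast
    then have "y = w"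
      using M yz single_valued_converse_path_steps[OF R] by (auto dest: single_valuedD)
    then show False using \<open>(w, z) \<in> M\<close> yz by blast
  qed
  fix z x y assume "(z, x) \<in> ((path_steps P - M) \<union> N\<inverse>)\<inverse>" "(z, y) \<in> ((path_steps P - M) \<union> N\<inverse>)\<inverse>"
  then show "x = y"
    using mixed single_valued_converse_path_steps[OF R] cycle(1) by (auto dest: single_valuedD)
qed

lemma hd_rerouted_steps:
  assumes "p \<in> P"
  shows "hd p \<notin> Range (rerouted_steps P M N)" "hd p \<in> Domain (rerouted_steps P M N)"
  unfolding rerouted_steps_def
proof -
  have no_in: "hd p \<notin> Range (path_steps P)" using hd_notin_Range_path_steps[OF R assms] .
  then have "hd p \<notin> Range M" using M by blast
  then show "hd p \<notin> Range ((path_steps P - M) \<union> N\<inverse>)" using no_in flank by blast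
  obtain y where y: "(hd p, y) \<in> path_steps P" using hd_in_Domain_path_steps[OF R ST assms] by blast
  show "hd p \<in> Domain ((path_steps P - M) \<union> N\<inverse>)"
  proof (cases "(hd p, y) \<in> M")
    case True
    then obtain w where "(w, hd p) \<in> M \<union> N" using cycle(3) by blast
    then have "(w, hd p) \<in> N" using M no_in by blast
    then show ?thesis by blast
  qed (use y in blast)
qed

lemma endpoint_of_rerouted_steps:
  assumes "x \<in> Range (rerouted_steps P M N)" "x \<notin> Domain (rerouted_steps P M N)"
  shows "x \<in> T"
proof (rule endpoint_of_path_steps[OF R])
  obtain w where w: "(w, x) \<in> (path_steps P - M) \<union> N\<inverse>"
    using assms(1) unfolding rerouted_steps_def by blast
  then show "x \<in> Range (path_steps P)" using flank M by blast
  show "x \<notin> Domain (path_steps P)"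
  proof
    assume "x \<in> Domain (path_steps P)"
    then obtain y where "(x, y) \<in> path_steps P" by blast
    then have xy: "(x, y) \<in> M" using assms(2) unfolding rerouted_steps_def by blast
    then obtain u where "(u, x) \<in> M \<union> N" using cycle(3) by blast
    then have ux: "(u, x) \<in> M" using assms(2) unfolding rerouted_steps_def by blast
    show False
    proof (cases "(w, x) \<in> N\<inverse>")
      case True
      then have "w = y" using xy cycle(1) by (auto dest: single_valuedD)
      then show False using True xy MN by blast
    next
      case False
      then have "w = u"
        using w ux M single_valued_converse_path_steps[OF R] by (auto dest: single_valuedD)
      then show False using w ux False by blast
    qed
  qed
qed

lemma routable_rerouted_steps:
  assumes N: "finite N"
    and edges: "\<And>x y. (x, y) \<in> rerouted_steps P M N \<Longrightarrow> {x, y} \<in> E' \<and> x \<in> V' \<and> y \<in> V'"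
  shows "routable V' E' S T k"
proof -
  interpret finite_partial_injection "rerouted_steps P M N"
    using finite_path_steps[OF R] N single_valued_rerouted_steps single_valued_converse_rerouted_steps
    by unfold_locales (auto simp: rerouted_steps_def)
  have "routable V' E' S T (card (hd ` P))"
  proof (rule routable_from_sources)
    show "finite (hd ` P)" using R unfolding routing_def by simp
    show "hd ` P \<subseteq> S" using routing_path[OF R] by blast
  qed (use hd_rerouted_steps endpoint_of_rerouted_steps edges in auto)
  then show ?thesis using card_hd_routing[OF R] by simp
qed

end

section \<open>Alternating cycles\<close>

definition alternating_segments :: "colour \<Rightarrow> colour \<Rightarrow> ('w \<times> 'w \<times> colour) list list \<Rightarrow> bool" where
  "alternating_segments c1 c2 segs \<longleftrightarrow> (\<forall>j<length segs.
     if even j then segs ! j \<noteq> [] \<and> (\<forall>a\<in>set (segs ! j). arc_col a = c2)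
     else (\<exists>a. segs ! j = [a] \<and> arc_col a = c1))"

lemma alternating_segments_Cons_Cons:
  "alternating_segments c1 c2 (s0 # s1 # segs) \<longleftrightarrow>
     s0 \<noteq> [] \<and> (\<forall>a\<in>set s0. arc_col a = c2) \<and> (\<exists>a. s1 = [a] \<and> arc_col a = c1) \<and>
     alternating_segments c1 c2 segs"
  unfolding alternating_segments_def by (simp add: All_less_Suc2)

lemma concat_alternating_segments:
  assumes "c1 \<noteq> c2" "even (length segs)" "alternating_segments c1 c2 segs"
  shows "successively (\<lambda>a b. arc_col a = c1 \<longrightarrow> arc_col b \<noteq> c1) (concat segs)
    \<and> (segs \<noteq> [] \<longrightarrow> arc_col (hd (concat segs)) = c2)"
  using assms(2,3)
proof (induction segs rule: induct_list012)
  case (3 s0 s1 segs)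
  then obtain a where s0: "s0 \<noteq> []" "\<forall>a\<in>set s0. arc_col a = c2" and s1: "s1 = [a]" "arc_col a = c1"
    and IH: "successively (\<lambda>a b. arc_col a = c1 \<longrightarrow> arc_col b \<noteq> c1) (concat segs)"
      "segs \<noteq> [] \<longrightarrow> arc_col (hd (concat segs)) = c2"
    by (auto simp: alternating_segments_Cons_Cons)
  have "concat segs \<noteq> [] \<Longrightarrow> arc_col (hd (concat segs)) = c2"
    using IH(2) by (cases segs) auto
  then have "successively (\<lambda>a b. arc_col a = c1 \<longrightarrow> arc_col b \<noteq> c1) (s1 @ concat segs)"
    using IH(1) s1 assms(1) by (cases "concat segs") (auto simp: successively_Cons)
  moreover have "successively (\<lambda>a b. arc_col a = c1 \<longrightarrow> arc_col b \<noteq> c1) s0"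
    using s0(2) assms(1) by (auto intro: successively_mono[of "\<lambda>_ _. True"] simp: successively_conv_nth)
  ultimately show ?case
    using s0 s1 assms(1) by (auto simp: successively_append_iff)
qed auto

lemma alt_cycle_alternates:
  assumes cyc: "alt_cycle c1 c2 A C" and c12: "c1 \<noteq> c2"
  shows "C \<noteq> []" "arc_col (hd C) = c2"
    "successively (\<lambda>a b. arc_col a = c1 \<longrightarrow> arc_col b \<noteq> c1) C"
proof -
  obtain segs r where "r > 0" "length segs = 2 * r" "C = concat segs"
    "alternating_segments c1 c2 segs"
    using cyc unfolding alt_cycle_def alternating_segments_def by auto
  then have "segs \<noteq> []" "even (length segs)" "C = concat segs" "alternating_segments c1 c2 segs"
    by auto
  then show "arc_col (hd C) = c2" "successively (\<lambda>a b. arc_col a = c1 \<longrightarrow> arc_col b \<noteq> c1) C"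
    using concat_alternating_segments[OF c12] by auto
  show "C \<noteq> []" using cyc unfolding alt_cycle_def simple_dcycle_def by blast
qed

context
  fixes A and C :: "('w \<times> 'w \<times> colour) list"
  assumes cyc: "simple_dcycle A C"
begin

lemma simple_dcycle_length_pos: "0 < length C"
  using cyc unfolding simple_dcycle_def by simp

lemma simple_dcycle_link: "i < length C \<Longrightarrow> arc_head (C ! i) = arc_tail (C ! (Suc i mod length C))"
  using cyc unfolding simple_dcycle_def by blast

lemma simple_dcycle_tail_inj:
  "i < length C \<Longrightarrow> j < length C \<Longrightarrow> arc_tail (C ! i) = arc_tail (C ! j) \<Longrightarrow> i = j"
  using cyc unfolding simple_dcycle_def by (simp add: distinct_conv_nth) blast

lemma simple_dcycle_head_inj:
  assumes ij: "i < length C" "j < length C" and eq: "arc_head (C ! i) = arc_head (C ! j)"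
  shows "i = j"
proof -
  have "Suc i mod length C < length C" "Suc j mod length C < length C"
    using simple_dcycle_length_pos by simp_all
  then have "Suc i mod length C = Suc j mod length C"
    using simple_dcycle_tail_inj simple_dcycle_link ij eq by simp
  moreover have "Suc i mod length C = (if Suc i = length C then 0 else Suc i)"
    "Suc j mod length C = (if Suc j = length C then 0 else Suc j)"
    using ij by auto
  ultimately show ?thesis by (auto split: if_splits)
qed

lemma simple_dcycle_pred:
  assumes "i < length C"
  shows "arc_head (C ! ((i + length C - 1) mod length C)) = arc_tail (C ! i)"
proof -
  note pos = simple_dcycle_length_pos
  have "Suc ((i + length C - 1) mod length C) mod length C = Suc (i + length C - 1) mod length C"
    by (simp add: mod_Suc_eq)
  also have "\<dots> = (i + length C) mod length C" using pos by simp
  also have "\<dots> = i" using assms by simp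
  finally have "Suc ((i + length C - 1) mod length C) mod length C = i" .
  moreover have "(i + length C - 1) mod length C < length C" using pos by simp
  ultimately show ?thesis using simple_dcycle_link by metis
qed

lemma arc_pair_cycle_iff:
  "(x, y) \<in> arc_pair ` set C \<longleftrightarrow> (\<exists>i<length C. arc_tail (C ! i) = x \<and> arc_head (C ! i) = y)"
  by (auto simp: set_conv_nth arc_pair_def)

lemma simple_dcycle_arc_pairs:
  "single_valued (arc_pair ` set C)" "single_valued ((arc_pair ` set C)\<inverse>)"
  "Domain (arc_pair ` set C) \<subseteq> Range (arc_pair ` set C)"
proof -
  show "single_valued (arc_pair ` set C)"
    by (rule single_valuedI) (auto simp: arc_pair_cycle_iff dest: simple_dcycle_tail_inj)
  show "single_valued ((arc_pair ` set C)\<inverse>)"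
    by (rule single_valuedI) (auto simp: arc_pair_cycle_iff dest: simple_dcycle_head_inj)
  show "Domain (arc_pair ` set C) \<subseteq> Range (arc_pair ` set C)"
  proof
    fix x assume "x \<in> Domain (arc_pair ` set C)"
    then obtain y where "(x, y) \<in> arc_pair ` set C" by blast
    then obtain i where i: "i < length C" "x = arc_tail (C ! i)"
      unfolding arc_pair_cycle_iff by blast
    moreover have "(i + length C - 1) mod length C < length C" using simple_dcycle_length_pos by simp
    ultimately have "(arc_tail (C ! ((i + length C - 1) mod length C)), x) \<in> arc_pair ` set C"
      using simple_dcycle_pred[OF i(1)] unfolding arc_pair_cycle_iff by blast
    then show "x \<in> Range (arc_pair ` set C)" by blast
  qed
qed

end

lemma alt_cycle_flanked:
  assumes alt: "alt_cycle c1 c2 A C" and c12: "c1 \<noteq> c2" and a: "a \<in> set C" "arc_col a = c1"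
  shows "\<exists>b\<in>set C. arc_col b \<noteq> c1 \<and> arc_head b = arc_tail a"
    and "\<exists>b\<in>set C. arc_col b \<noteq> c1 \<and> arc_tail b = arc_head a"
proof -
  have cyc: "simple_dcycle A C" using alt unfolding alt_cycle_def by blast
  note alternates = alt_cycle_alternates[OF alt c12]
  obtain i where i: "i < length C" "a = C ! i" using a(1) by (auto simp: in_set_conv_nth)
  have "i \<noteq> 0"
  proof
    assume "i = 0"
    then have "a = hd C" using i alternates(1) by (simp add: hd_conv_nth)
    then show False using a(2) alternates(2) c12 by simp
  qed
  then have "arc_col (C ! (i - 1)) \<noteq> c1"
    using successively_nth[OF alternates(3), of "i - 1"] i a(2) by auto
  moreover have "arc_head (C ! (i - 1)) = arc_tail a"
    using simple_dcycle_link[OF cyc, of "i - 1"] i \<open>i \<noteq> 0\<close> by simp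
  ultimately show "\<exists>b\<in>set C. arc_col b \<noteq> c1 \<and> arc_head b = arc_tail a"
    using i by (metis less_imp_diff_less nth_mem)
  show "\<exists>b\<in>set C. arc_col b \<noteq> c1 \<and> arc_tail b = arc_head a"
  proof (cases "Suc i < length C")
    case True
    then have "arc_col (C ! Suc i) \<noteq> c1"
      using successively_nth[OF alternates(3) True] i a(2) by auto
    then show ?thesis using simple_dcycle_link[OF cyc i(1)] True i(2) by (metis mod_less nth_mem)
  next
    case False
    then have "Suc i = length C" using i by simp
    then have "arc_tail (C ! 0) = arc_head a" using simple_dcycle_link[OF cyc i(1)] i(2) by simp
    moreover have "arc_col (C ! 0) \<noteq> c1" using alternates(1,2) c12 by (simp add: hd_conv_nth)
    ultimately show ?thesis using alternates(1) by (metis length_greater_0_conv nth_mem)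
  qed
qed
definition colour_steps :: "colour \<Rightarrow> ('w \<times> 'w \<times> colour) list \<Rightarrow> ('w \<times> 'w) set" where
  "colour_steps c C = arc_pair ` {a \<in> set C. arc_col a = c}"

lemma alt_cycle_colour_steps:
  assumes cPQ: "cP \<noteq> cQ" and alt: "alt_cycle cQ cP (path_arcs cP P \<union> path_arcs cQ Q) C"
  shows "colour_steps cP C \<subseteq> path_steps P" "colour_steps cQ C \<subseteq> path_steps Q"
    and "colour_steps cP C \<union> colour_steps cQ C = arc_pair ` set C"
    and "colour_steps cP C \<noteq> {}"
    and "\<And>u v. (u, v) \<in> colour_steps cQ C \<Longrightarrow>
      u \<in> Range (colour_steps cP C) \<and> v \<in> Domain (colour_steps cP C)"
proof -
  have cyc: "simple_dcycle (path_arcs cP P \<union> path_arcs cQ Q) C"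
    using alt unfolding alt_cycle_def by blast
  have arcs: "arc_col a = cP \<and> arc_pair a \<in> path_steps P \<or> arc_col a = cQ \<and> arc_pair a \<in> path_steps Q"
    if "a \<in> set C" for a
    using that cyc unfolding simple_dcycle_def by (auto simp: path_arcs_iff)
  show "colour_steps cP C \<subseteq> path_steps P"
    unfolding colour_steps_def by (rule image_subsetI) (use arcs cPQ in blast)
  show "colour_steps cQ C \<subseteq> path_steps Q"
    unfolding colour_steps_def by (rule image_subsetI) (use arcs cPQ in blast)
  have "set C = {a \<in> set C. arc_col a = cP} \<union> {a \<in> set C. arc_col a = cQ}" using arcs by blast
  then show "colour_steps cP C \<union> colour_steps cQ C = arc_pair ` set C"
    unfolding colour_steps_def by (metis image_Un)
  show "colour_steps cP C \<noteq> {}"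
    using alt_cycle_alternates(1,2)[OF alt cPQ[symmetric]] hd_in_set unfolding colour_steps_def by blast
  fix u v assume uv: "(u, v) \<in> colour_steps cQ C"
  then obtain a where a: "a \<in> set C" "arc_col a = cQ" "(u, v) = arc_pair a"
    unfolding colour_steps_def by blast
  obtain b b' where "b \<in> set C" "arc_col b \<noteq> cQ" "arc_head b = u"
    "b' \<in> set C" "arc_col b' \<noteq> cQ" "arc_tail b' = v"
    using alt_cycle_flanked[OF alt cPQ[symmetric] a(1,2)] a(3) unfolding arc_pair_def by auto
  moreover from this have "arc_col b = cP" "arc_col b' = cP" using arcs by blast+
  ultimately have "arc_pair b \<in> colour_steps cP C" "arc_pair b' \<in> colour_steps cP C"
    unfolding colour_steps_def by auto
  then show "u \<in> Range (colour_steps cP C) \<and> v \<in> Domain (colour_steps cP C)"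
    using \<open>arc_head b = u\<close> \<open>arc_tail b' = v\<close> unfolding arc_pair_def by (metis DomainI RangeI)
qed

lemma other_step_edge_ne:
  assumes RP: "routing V E S T k P" and apart: "path_steps P \<inter> (path_steps Q \<union> (path_steps Q)\<inverse>) = {}"
    and P0: "(t0, h0) \<in> path_steps P"
    and xy: "(x, y) \<in> (path_steps P - {(t0, h0)}) \<union> path_steps Q \<union> (path_steps Q)\<inverse>"
  shows "{x, y} \<noteq> {t0, h0}"
proof
  assume "{x, y} = {t0, h0}"
  then consider "x = t0" "y = h0" | "x = h0" "y = t0" by (metis doubleton_eq_iff)
  then show False
  proof cases
    case 1
    then show False using xy P0 apart by auto
  next
    case 2
    then show False using xy P0 apart path_steps_asym[OF RP P0] by auto
  qed
qed

lemma rerouted_steps_edge: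
  assumes RP: "routing VH EH S T k P" and RQ: "routing VH EH S' T' k Q"
    and apart: "path_steps P \<inter> (path_steps Q \<union> (path_steps Q)\<inverse>) = {}"
    and MP: "M \<subseteq> path_steps P" and NQ: "N \<subseteq> path_steps Q" and M0: "(t0, h0) \<in> M"
    and xy: "(x, y) \<in> rerouted_steps P M N"
  shows "{x, y} \<in> EH - {{t0, h0}} \<and> x \<in> VH \<and> y \<in> VH"
proof -
  have P0: "(t0, h0) \<in> path_steps P" using M0 MP by blast
  have "{x, y} \<in> EH \<and> x \<in> VH \<and> y \<in> VH"
  proof (cases "(y, x) \<in> N")
    case True
    then have "{y, x} \<in> EH \<and> y \<in> VH \<and> x \<in> VH" using path_step_edge[OF RQ] NQ by blast
    then show ?thesis by (simp add: insert_commute)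
  next
    case False
    then have "(x, y) \<in> path_steps P" using xy unfolding rerouted_steps_def by blast
    then show ?thesis by (rule path_step_edge[OF RP])
  qed
  moreover have "{x, y} \<noteq> {t0, h0}"
    by (rule other_step_edge_ne[OF RP apart P0]) (use xy NQ M0 in \<open>auto simp: rerouted_steps_def\<close>)
  ultimately show ?thesis by simp
qed

lemma alt_cycle_frees_edge:
  assumes RP: "routing VH EH S T k P" and RQ: "routing VH EH S' T' k Q" and ST: "S \<inter> T = {}"
    and apart: "path_steps P \<inter> (path_steps Q \<union> (path_steps Q)\<inverse>) = {}"
    and cPQ: "cP \<noteq> cQ" and alt: "alt_cycle cQ cP (path_arcs cP P \<union> path_arcs cQ Q) C"
  shows "\<exists>e\<in>EH. routable VH (EH - {e}) S T k \<and> routable VH (EH - {e}) S' T' k"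
proof -
  let ?M = "colour_steps cP C" and ?N = "colour_steps cQ C"
  note MP = alt_cycle_colour_steps(1)[OF cPQ alt] and NQ = alt_cycle_colour_steps(2)[OF cPQ alt]
  obtain t0 h0 where M0: "(t0, h0) \<in> ?M"
    using alt_cycle_colour_steps(4)[OF cPQ alt] by auto
  then have P0: "(t0, h0) \<in> path_steps P" using MP by blast
  have "routable VH (EH - {{t0, h0}}) S T k"
  proof (rule routable_rerouted_steps[OF RP ST MP _ _ _ _ alt_cycle_colour_steps(5)[OF cPQ alt] _
        rerouted_steps_edge[OF RP RQ apart MP NQ M0]])
    show "?M \<inter> ?N = {}" using MP NQ apart by blast
    have "simple_dcycle (path_arcs cP P \<union> path_arcs cQ Q) C"
      using alt unfolding alt_cycle_def by blast
    then show "single_valued (?M \<union> ?N)" "single_valued ((?M \<union> ?N)\<inverse>)"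
      "Domain (?M \<union> ?N) \<subseteq> Range (?M \<union> ?N)"
      unfolding alt_cycle_colour_steps(3)[OF cPQ alt] by (rule simple_dcycle_arc_pairs)+
    show "finite ?N" unfolding colour_steps_def by simp
  qed
  moreover have "routing VH (EH - {{t0, h0}}) S' T' k Q"
  proof (rule routing_mono[OF RQ])
    fix x y assume "(x, y) \<in> path_steps Q"
    then show "{x, y} \<in> EH - {{t0, h0}}"
      using path_step_edge[OF RQ] other_step_edge_ne[OF RP apart P0] by simp
  qed
  moreover have "{t0, h0} \<in> EH" using path_step_edge[OF RP P0] by simp
  ultimately show ?thesis unfolding routable_def by (intro bexI[of _ "{t0, h0}"]) auto
qed
section \<open>Contracting an edge of a minor\<close>

lemma minor_model_edgeE:
  assumes "minor_model V E VH EH" "e \<in> EH"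
  obtains X Y x y where "e = {X, Y}" "X \<in> VH" "Y \<in> VH" "X \<noteq> Y" "x \<in> X" "y \<in> Y" "{x, y} \<in> E"
proof -
  have "\<forall>e\<in>EH. \<exists>X Y. e = {X, Y} \<and> X \<in> VH \<and> Y \<in> VH \<and> X \<noteq> Y \<and> (\<exists>x\<in>X. \<exists>y\<in>Y. {x, y} \<in> E)"
    using assms(1) unfolding minor_model_def by (elim conjE)
  from this[rule_format, OF assms(2)] show ?thesis
    by (elim exE conjE bexE) (rule that)
qed

lemma minor_model_edge:
  assumes M: "minor_model V E VH EH" and e: "{u, v} \<in> EH"
  shows "u \<noteq> v \<and> u \<in> VH \<and> v \<in> VH \<and> (\<exists>x\<in>u. \<exists>y\<in>v. {x, y} \<in> E)"
proof -
  obtain X Y x y where XY: "{u, v} = {X, Y}" "X \<in> VH" "Y \<in> VH" "X \<noteq> Y" "x \<in> X" "y \<in> Y" "{x, y} \<in> E"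
    using minor_model_edgeE[OF M e] .
  have "u = X \<and> v = Y \<or> u = Y \<and> v = X" using XY(1) by (metis doubleton_eq_iff)
  then show ?thesis
  proof (elim disjE conjE)
    assume "u = Y" "v = X"
    moreover have "{y, x} \<in> E" using XY(7) by (simp add: insert_commute)
    ultimately show ?thesis using XY(2-6) by auto
  qed (use XY in auto)
qed

lemma minor_model_disjoint:
  "minor_model V E VH EH \<Longrightarrow> X \<in> VH \<Longrightarrow> Y \<in> VH \<Longrightarrow> X \<noteq> Y \<Longrightarrow> X \<inter> Y = {}"
  unfolding minor_model_def by (elim conjE) blast

lemma minor_model_branch_set:
  "minor_model V E VH EH \<Longrightarrow> X \<in> VH \<Longrightarrow> X \<noteq> {} \<and> X \<subseteq> V \<and> connected_set E X"
  unfolding minor_model_def by (elim conjE) blast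

lemma minor_model_subset_edges:
  assumes "minor_model V E VH EH" "EH' \<subseteq> EH"
  shows "minor_model V E VH EH'"
proof -
  have "\<forall>e\<in>EH. \<exists>X Y. e = {X, Y} \<and> X \<in> VH \<and> Y \<in> VH \<and> X \<noteq> Y \<and> (\<exists>x\<in>X. \<exists>y\<in>Y. {x, y} \<in> E)"
    using assms(1) unfolding minor_model_def by (elim conjE)
  with assms(2) have "\<forall>e\<in>EH'. \<exists>X Y. e = {X, Y} \<and> X \<in> VH \<and> Y \<in> VH \<and> X \<noteq> Y \<and> (\<exists>x\<in>X. \<exists>y\<in>Y. {x, y} \<in> E)"
    by (meson subsetD)
  with assms(1) show ?thesis unfolding minor_model_def by (elim conjE) (intro conjI)
qed

lemma connected_set_Un:
  assumes cX: "connected_set E X" and cY: "connected_set E Y"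
    and x0: "x0 \<in> X" and y0: "y0 \<in> Y" and e: "{x0, y0} \<in> E"
  shows "connected_set E (X \<union> Y)"
proof -
  define adj where "adj Z = {(a, b). {a, b} \<in> E \<and> a \<in> Z \<and> b \<in> Z}" for Z
  have mono: "(adj X)\<^sup>* \<subseteq> (adj (X \<union> Y))\<^sup>*" "(adj Y)\<^sup>* \<subseteq> (adj (X \<union> Y))\<^sup>*"
    by (auto intro!: rtrancl_mono simp: adj_def)
  have bridge: "(x0, y0) \<in> adj (X \<union> Y)" "(y0, x0) \<in> adj (X \<union> Y)"
    using x0 y0 e by (auto simp: adj_def insert_commute)
  have to_x0: "(u, x0) \<in> (adj (X \<union> Y))\<^sup>*" if "u \<in> X \<union> Y" for u
  proof (cases "u \<in> X")
    case False
    then have "(u, y0) \<in> (adj (X \<union> Y))\<^sup>*"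
      using that cY y0 mono unfolding connected_set_def adj_def by blast
    then show ?thesis using bridge by (meson rtrancl.rtrancl_into_rtrancl)
  qed (use cX x0 mono in \<open>auto simp: connected_set_def adj_def\<close>)
  have from_x0: "(x0, v) \<in> (adj (X \<union> Y))\<^sup>*" if "v \<in> X \<union> Y" for v
  proof (cases "v \<in> X")
    case False
    then have "(y0, v) \<in> (adj (X \<union> Y))\<^sup>*"
      using that cY y0 mono unfolding connected_set_def adj_def by blast
    then show ?thesis using bridge by (meson converse_rtrancl_into_rtrancl)
  qed (use cX x0 mono in \<open>auto simp: connected_set_def adj_def\<close>)
  show ?thesis
    unfolding connected_set_def using to_x0 from_x0 rtrancl_trans unfolding adj_def by fast
qed

lemma subset_contract_map: "Z \<subseteq> contract_map X Y Z"
  unfolding contract_map_def by auto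

lemma contract_map_commute: "contract_map X Y = contract_map Y X"
  by (rule ext) (auto simp: contract_map_def)

lemma contract_map_other: "W \<noteq> X \<Longrightarrow> W \<noteq> Y \<Longrightarrow> contract_map X Y W = W"
  unfolding contract_map_def by simp

lemma contract_edges_image:
  assumes "{u, v} \<in> EH" "contract_map X Y u \<noteq> contract_map X Y v"
  shows "{contract_map X Y u, contract_map X Y v} \<in> contract_edges EH X Y"
proof -
  have "contract_map X Y ` {u, v} = {contract_map X Y u, contract_map X Y v}" by simp
  moreover have "card {contract_map X Y u, contract_map X Y v} = 2" using assms(2) by simp
  ultimately show ?thesis unfolding contract_edges_def using assms(1) by (metis (mono_tags, lifting) mem_Collect_eq)
qed

lemma contract_map_disjoint:
  assumes M: "minor_model V E VH EH" and XY: "X \<in> VH" "Y \<in> VH"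
    and W: "W1 \<in> VH" "W2 \<in> VH" "contract_map X Y W1 \<noteq> contract_map X Y W2"
  shows "contract_map X Y W1 \<inter> contract_map X Y W2 = {}"
proof -
  let ?f = "contract_map X Y"
  have avoid: "W \<inter> (X \<union> Y) = {}" if "W \<in> VH" "W \<noteq> X" "W \<noteq> Y" for W
    using minor_model_disjoint[OF M that(1) XY(1) that(2)] minor_model_disjoint[OF M that(1) XY(2) that(3)]
    by blast
  show ?thesis
  proof (cases "W1 = X \<or> W1 = Y")
    case True
    with W(3) have "W2 \<noteq> X" "W2 \<noteq> Y" "?f W1 = X \<union> Y" "?f W2 = W2"
      unfolding contract_map_def by auto
    with avoid[OF W(2)] show ?thesis by blast
  next
    case False
    then have f1: "?f W1 = W1" unfolding contract_map_def by auto
    show ?thesis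
    proof (cases "W2 = X \<or> W2 = Y")
      case True
      then have "?f W2 = X \<union> Y" unfolding contract_map_def by auto
      with f1 avoid[OF W(1)] False show ?thesis by blast
    next
      case False
      then have "?f W2 = W2" unfolding contract_map_def by auto
      with f1 W minor_model_disjoint[OF M] show ?thesis by metis
    qed
  qed
qed

lemma contract_edgesE:
  assumes M: "minor_model V E VH EH" and e': "e' \<in> contract_edges EH X Y"
  obtains A B where "e' = {contract_map X Y A, contract_map X Y B}" "A \<in> VH" "B \<in> VH"
    "contract_map X Y A \<noteq> contract_map X Y B"
    "\<exists>x\<in>contract_map X Y A. \<exists>y\<in>contract_map X Y B. {x, y} \<in> E"
proof -
  let ?f = "contract_map X Y"
  obtain e0 where e0: "e' = ?f ` e0" "e0 \<in> EH" "card (?f ` e0) = 2"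
    using e' unfolding contract_edges_def by blast
  obtain A B x y where AB: "e0 = {A, B}" "A \<in> VH" "B \<in> VH" "A \<noteq> B" "x \<in> A" "y \<in> B" "{x, y} \<in> E"
    by (rule minor_model_edgeE[OF M e0(2)])
  show ?thesis
  proof (rule that[OF _ AB(2,3)])
    show "e' = {?f A, ?f B}" using e0(1) AB(1) by simp
    show "?f A \<noteq> ?f B"
    proof
      assume "?f A = ?f B"
      then have "?f ` e0 = {?f A}" using AB(1) by simp
      then show False using e0(3) by simp
    qed
    show "\<exists>x\<in>?f A. \<exists>y\<in>?f B. {x, y} \<in> E"
      using AB(5-7) subset_contract_map[of A X Y] subset_contract_map[of B X Y] by blast
  qed
qed

lemma minor_model_contract:
  assumes M: "minor_model V E VH EH" and e: "{X, Y} \<in> EH"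
  shows "minor_model V E (contract_vertices VH X Y) (contract_edges EH X Y)"
proof -
  let ?f = "contract_map X Y"
  obtain x0 y0 where XY: "X \<noteq> Y" "X \<in> VH" "Y \<in> VH" "x0 \<in> X" "y0 \<in> Y" "{x0, y0} \<in> E"
    using minor_model_edge[OF M e] by blast
  have "connected_set E (X \<union> Y)"
    using minor_model_branch_set[OF M XY(2)] minor_model_branch_set[OF M XY(3)]
    by (intro connected_set_Un[OF _ _ XY(4-6)]) auto
  then have "\<forall>Z\<in>?f ` VH. Z \<noteq> {} \<and> Z \<subseteq> V \<and> connected_set E Z"
    using minor_model_branch_set[OF M] XY(2,3) unfolding contract_map_def by auto
  moreover have "\<forall>Z1\<in>?f ` VH. \<forall>Z2\<in>?f ` VH. Z1 \<noteq> Z2 \<longrightarrow> Z1 \<inter> Z2 = {}"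
    using contract_map_disjoint[OF M XY(2,3)] by auto
  moreover have "\<forall>e'\<in>contract_edges EH X Y. \<exists>A B. e' = {A, B} \<and> A \<in> ?f ` VH \<and> B \<in> ?f ` VH
      \<and> A \<noteq> B \<and> (\<exists>x\<in>A. \<exists>y\<in>B. {x, y} \<in> E)"
  proof
    fix e' assume "e' \<in> contract_edges EH X Y"
    then obtain A B where "e' = {?f A, ?f B}" "A \<in> VH" "B \<in> VH" "?f A \<noteq> ?f B"
      "\<exists>x\<in>?f A. \<exists>y\<in>?f B. {x, y} \<in> E"
      by (rule contract_edgesE[OF M])
    then show "\<exists>A B. e' = {A, B} \<and> A \<in> ?f ` VH \<and> B \<in> ?f ` VH \<and> A \<noteq> B \<and> (\<exists>x\<in>A. \<exists>y\<in>B. {x, y} \<in> E)"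
      by (intro exI[of _ "?f A"] exI[of _ "?f B"]) simp
  qed
  ultimately show ?thesis unfolding minor_model_def contract_vertices_def by (intro conjI)
qed

lemma Un_notin_minor_model:
  assumes M: "minor_model V E VH EH" and XY: "X \<in> VH" "Y \<in> VH" "X \<noteq> Y"
  shows "X \<union> Y \<notin> VH"
proof
  assume XY_in: "X \<union> Y \<in> VH"
  have "X \<noteq> {}" "Y \<noteq> {}" using minor_model_branch_set[OF M] XY by auto
  moreover have "X \<inter> Y = {}" using minor_model_disjoint[OF M XY] .
  ultimately have "X \<union> Y \<noteq> X" "X \<union> Y \<noteq> Y" by blast+
  then have "(X \<union> Y) \<inter> X = {}"
    using minor_model_disjoint[OF M XY_in XY(1)] by blast
  with \<open>X \<noteq> {}\<close> show False by blast
qed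

lemma is_path_contract_avoiding:
  assumes "is_path VH EH q" "X \<notin> set q" "Y \<notin> set q"
  shows "is_path (contract_vertices VH X Y) (contract_edges EH X Y) q"
proof -
  have id: "contract_map X Y w = w" if "w \<in> set q" for w
    using assms(2,3) that by (metis contract_map_other)
  have "set q \<subseteq> contract_vertices VH X Y"
    using assms(1) id unfolding is_path_def contract_vertices_def by (metis image_eqI subsetI subsetD)
  moreover have "{q ! i, q ! Suc i} \<in> contract_edges EH X Y" if "Suc i < length q" for i
  proof -
    have "q ! i \<noteq> q ! Suc i"
      using assms(1) that unfolding is_path_def by (simp add: nth_eq_iff_index_eq)
    then show ?thesis
      using assms(1) that id[of "q ! i"] id[of "q ! Suc i"] contract_edges_image[of "q ! i" "q ! Suc i" EH X Y]
      unfolding is_path_def by (metis Suc_lessD nth_mem)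
  qed
  ultimately show ?thesis using assms(1) unfolding is_path_def by blast
qed

lemma is_path_contract_step:
  assumes M: "minor_model V E VH EH" and p: "is_path VH EH (p1 @ [X, Y] @ p2)"
    and "p1 \<noteq> []" "p2 \<noteq> []"
  shows "is_path (contract_vertices VH X Y) (contract_edges EH X Y) (p1 @ [X \<union> Y] @ p2)"
proof -
  let ?f = "contract_map X Y"
  have dist: "distinct (p1 @ [X, Y] @ p2)" and sub: "set (p1 @ [X, Y] @ p2) \<subseteq> VH"
    and succ: "successively (\<lambda>a b. {a, b} \<in> EH) (p1 @ [X, Y] @ p2)"
    using p by (auto simp: is_path_iff_successively)
  have XY: "X \<in> VH" "Y \<in> VH" "X \<noteq> Y" using dist sub by auto
  have XY_notin: "X \<union> Y \<notin> set p1" "X \<union> Y \<notin> set p2"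
    using Un_notin_minor_model[OF M XY] sub by auto
  have "is_path VH EH p1" "is_path VH EH p2"
    using dist sub succ assms(3,4)
    by (auto simp: is_path_iff_successively successively_append_iff successively_Cons)
  moreover have "X \<notin> set p1" "Y \<notin> set p1" "X \<notin> set p2" "Y \<notin> set p2" using dist by auto
  ultimately have p1: "is_path (contract_vertices VH X Y) (contract_edges EH X Y) p1"
    and p2: "is_path (contract_vertices VH X Y) (contract_edges EH X Y) p2"
    by (auto intro: is_path_contract_avoiding)
  have "{last p1, X} \<in> EH" "{Y, hd p2} \<in> EH"
    using succ assms(3,4) by (auto simp: successively_append_iff successively_Cons)
  moreover have "?f (last p1) = last p1" "?f (hd p2) = hd p2"
    using dist assms(3,4) by (auto intro!: contract_map_other)
  moreover have "?f X = X \<union> Y" "?f Y = X \<union> Y" unfolding contract_map_def by auto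
  moreover have "last p1 \<noteq> X \<union> Y" "hd p2 \<noteq> X \<union> Y"
    using XY_notin last_in_set[OF assms(3)] hd_in_set[OF assms(4)] by metis+
  ultimately have joins: "{last p1, X \<union> Y} \<in> contract_edges EH X Y" "{X \<union> Y, hd p2} \<in> contract_edges EH X Y"
    using contract_edges_image[of "last p1" X EH X Y] contract_edges_image[of Y "hd p2" EH X Y] by auto
  have "X \<union> Y \<in> contract_vertices VH X Y"
    using XY(1) unfolding contract_vertices_def contract_map_def by force
  then show ?thesis
    using p1 p2 joins XY_notin dist assms(3,4)
    by (auto simp: is_path_iff_successively successively_append_iff successively_Cons)
qed

lemma routable_contract_path_step:
  assumes M: "minor_model V E VH EH" and R: "routing VH EH S T k P"
    and step: "(X, Y) \<in> path_steps P" and inner: "X \<notin> S \<union> T" "Y \<notin> S \<union> T"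
  shows "routable (contract_vertices VH X Y) (contract_edges EH X Y) S T k"
proof -
  let ?VH = "contract_vertices VH X Y" and ?EH = "contract_edges EH X Y"
  obtain p0 i where p0: "p0 \<in> P" "Suc i < length p0" "p0 ! i = X" "p0 ! Suc i = Y"
    using step by (rule path_stepsE)
  define p1 p2 where "p1 = take i p0" and "p2 = drop (Suc (Suc i)) p0"
  have split: "p0 = p1 @ [X, Y] @ p2"
    unfolding p1_def p2_def using p0(2-4)
    by (metis Cons_nth_drop_Suc Suc_lessD append_Cons append_Nil append_take_drop_id)
  have path0: "is_path VH EH p0" "hd p0 \<in> S" "last p0 \<in> T" using routing_path[OF R p0(1)] by auto
  have "p1 \<noteq> []" using path0(2) inner(1) split by (cases p1) auto
  moreover have "p2 \<noteq> []" using path0(3) inner(2) split by (cases p2 rule: rev_cases) auto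
  ultimately have new_path: "is_path ?VH ?EH (p1 @ [X \<union> Y] @ p2)"
    and ends: "hd (p1 @ [X \<union> Y] @ p2) = hd p0" "last (p1 @ [X \<union> Y] @ p2) = last p0"
    using is_path_contract_step[OF M] path0(1) split by (auto simp del: append.simps)
  have XY: "X \<in> set p0" "Y \<in> set p0" "X \<in> VH" "Y \<in> VH" "X \<noteq> Y"
    using path0(1) split unfolding is_path_def by auto
  have "routing ?VH ?EH S T k (insert (p1 @ [X \<union> Y] @ p2) (P - {p0}))"
  proof (rule routing_exchange_path[OF R p0(1) new_path])
    show "hd (p1 @ [X \<union> Y] @ p2) \<in> S" "last (p1 @ [X \<union> Y] @ p2) \<in> T"
      using ends path0(2,3) by simp_all
    show "set (p1 @ [X \<union> Y] @ p2) \<subseteq> insert (X \<union> Y) (set p0)" using split by auto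
    show "X \<union> Y \<notin> set q" if "q \<in> P" for q
      using routing_path[OF R that] Un_notin_minor_model[OF M XY(3-5)] unfolding is_path_def by blast
    show "is_path ?VH ?EH q" if "q \<in> P" "q \<noteq> p0" for q
      using routing_same_path[OF R that(1) p0(1)] XY(1,2) that(2) routing_path[OF R that(1)]
      by (blast intro: is_path_contract_avoiding)
  qed simp
  then show ?thesis unfolding routable_def by blast
qed

section \<open>Consequences of minimality\<close>

lemma degree_one_unique_neighbour:
  assumes M: "minor_model V E VH EH" and deg: "degree E x = 1" and x: "{x} \<in> VH"
    and e: "{{x}, Y1} \<in> EH" "{{x}, Y2} \<in> EH"
  shows "Y1 = Y2"
proof -
  have nbr: "\<exists>y. y \<in> Y \<and> {x, y} \<in> E \<and> Y \<in> VH \<and> x \<noteq> y" if "{{x}, Y} \<in> EH" for Y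
  proof -
    have "{x} \<noteq> Y" "Y \<in> VH" "\<exists>y\<in>Y. {x, y} \<in> E" using minor_model_edge[OF M that] by auto
    moreover have "{x} \<inter> Y = {}" using minor_model_disjoint[OF M x] calculation(1,2) by simp
    ultimately show ?thesis by auto
  qed
  obtain y1 where y1: "y1 \<in> Y1" "{x, y1} \<in> E" "Y1 \<in> VH" "x \<noteq> y1" using nbr[OF e(1)] by blast
  obtain y2 where y2: "y2 \<in> Y2" "{x, y2} \<in> E" "Y2 \<in> VH" "x \<noteq> y2" using nbr[OF e(2)] by blast
  obtain e0 where e0: "{e\<in>E. x \<in> e} = {e0}"
    using deg unfolding degree_def by (rule card_1_singletonE)
  have "{x, y1} \<in> {e\<in>E. x \<in> e}" "{x, y2} \<in> {e\<in>E. x \<in> e}" using y1 y2 by simp_all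
  then have "{x, y1} = {x, y2}" unfolding e0 by simp
  then have "y1 = y2" using y1(4) by (metis doubleton_eq_iff)
  then have "Y1 \<inter> Y2 \<noteq> {}" using y1(1) y2(1) by blast
  then show ?thesis using minor_model_disjoint[OF M y1(3) y2(3)] by blast
qed

lemma degree_one_on_path_is_end:
  assumes M: "minor_model V E VH EH" and R: "routing VH EH S T k P" and q: "q \<in> P"
    and x: "{x} \<in> set q" "{x} \<in> VH" and deg: "degree E x = 1"
  shows "{x} \<in> S \<union> T"
proof (rule ccontr)
  assume inner: "{x} \<notin> S \<union> T"
  have dist: "distinct q" and succ: "successively (\<lambda>a b. {a, b} \<in> EH) q"
    using routing_path[OF R q] by (auto simp: is_path_iff_successively)
  obtain j where j: "j < length q" "q ! j = {x}" using x(1) by (metis in_set_conv_nth)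
  have "j \<noteq> 0"
    using j inner routing_path[OF R q] routing_path_not_Nil[OF R q] by (metis UnI1 hd_conv_nth)
  then obtain i where i: "j = Suc i" using not0_implies_Suc by blast
  have "Suc j \<noteq> length q"
    using j inner routing_path[OF R q] by (metis UnI2 diff_Suc_1 last_conv_nth list.size(3) not_less0)
  then have sj: "Suc j < length q" using j by simp
  have "{q ! i, {x}} \<in> EH" using successively_nth[OF succ, of i] i j by simp
  then have "{{x}, q ! i} \<in> EH" by (simp add: insert_commute)
  moreover have "{{x}, q ! Suc j} \<in> EH" using successively_nth[OF succ sj] j by simp
  ultimately have "q ! i = q ! Suc j" using degree_one_unique_neighbour[OF M deg x(2)] by blast
  then have "i = Suc j" using dist sj i nth_eq_iff_index_eq by (metis Suc_lessD)
  then show False using i by simp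
qed

lemma common_vertex_not_terminal:
  assumes M: "minor_model V E VH EH"
    and disj: "S1 \<inter> S2 = {}" "S1 \<inter> T2 = {}" "T1 \<inter> S2 = {}" "T1 \<inter> T2 = {}"
    and deg: "\<forall>x \<in> S1 \<union> T1 \<union> S2 \<union> T2. degree E x = 1 \<and> {x} \<in> VH"
    and Rr: "routing VH EH ((\<lambda>x. {x}) ` S1) ((\<lambda>x. {x}) ` T1) k R"
    and Bb: "routing VH EH ((\<lambda>x. {x}) ` S2) ((\<lambda>x. {x}) ` T2) k B"
    and v: "p \<in> R" "q \<in> B" "v \<in> set p" "v \<in> set q"
  shows "v \<notin> (\<lambda>x. {x}) ` (S1 \<union> T1 \<union> S2 \<union> T2)"
proof
  assume "v \<in> (\<lambda>x. {x}) ` (S1 \<union> T1 \<union> S2 \<union> T2)"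
  then obtain x where x: "v = {x}" "x \<in> S1 \<union> T1 \<union> S2 \<union> T2" by blast
  then have "{x} \<in> (\<lambda>x. {x}) ` S1 \<union> (\<lambda>x. {x}) ` T1" "{x} \<in> (\<lambda>x. {x}) ` S2 \<union> (\<lambda>x. {x}) ` T2"
    using degree_one_on_path_is_end[OF M Rr v(1)] degree_one_on_path_is_end[OF M Bb v(2)] v(3,4) deg
    by blast+
  then show False using disj by blast
qed

lemma minimal_minor_no_common_edge:
  assumes H: "minimal_minor V E S1 T1 S2 T2 k VH EH"
    and disj: "S1 \<inter> S2 = {}" "S1 \<inter> T2 = {}" "T1 \<inter> S2 = {}" "T1 \<inter> T2 = {}"
    and deg: "\<forall>x \<in> S1 \<union> T1 \<union> S2 \<union> T2. degree E x = 1"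
    and Rr: "routing VH EH ((\<lambda>x. {x}) ` S1) ((\<lambda>x. {x}) ` T1) k R"
    and Bb: "routing VH EH ((\<lambda>x. {x}) ` S2) ((\<lambda>x. {x}) ` T2) k B"
  shows "path_steps R \<inter> (path_steps B \<union> (path_steps B)\<inverse>) = {}"
proof (rule ccontr)
  assume "path_steps R \<inter> (path_steps B \<union> (path_steps B)\<inverse>) \<noteq> {}"
  then obtain a b where red: "(a, b) \<in> path_steps R"
    and blue: "(a, b) \<in> path_steps B \<or> (b, a) \<in> path_steps B" by auto
  have good: "good_minor V E S1 T1 S2 T2 k VH EH" using H unfolding minimal_minor_def by blast
  then have M: "minor_model V E VH EH" and terminals: "\<forall>x \<in> S1 \<union> T1 \<union> S2 \<union> T2. {x} \<in> VH"
    unfolding good_minor_def by blast+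
  have "v \<notin> (\<lambda>x. {x}) ` (S1 \<union> T1 \<union> S2 \<union> T2)" if v: "v \<in> {a, b}" for v
  proof -
    obtain p q where "p \<in> R" "q \<in> B" "v \<in> set p" "v \<in> set q"
      using v path_step_on_some_path[OF red] blue path_step_on_some_path[of _ _ B] by blast
    then show ?thesis
      using common_vertex_not_terminal[OF M disj _ Rr Bb] deg terminals by blast
  qed
  then have inner: "a \<notin> (\<lambda>x. {x}) ` (S1 \<union> T1)" "b \<notin> (\<lambda>x. {x}) ` (S1 \<union> T1)"
    "a \<notin> (\<lambda>x. {x}) ` (S2 \<union> T2)" "b \<notin> (\<lambda>x. {x}) ` (S2 \<union> T2)"
    "\<forall>x\<in>S1 \<union> T1 \<union> S2 \<union> T2. a \<noteq> {x} \<and> b \<noteq> {x}" by blast+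
  have "{a, b} \<in> EH" using path_step_edge[OF Rr red] by blast
  have "good_minor V E S1 T1 S2 T2 k (contract_vertices VH a b) (contract_edges EH a b)"
    unfolding good_minor_def
  proof (intro conjI)
    show "minor_model V E (contract_vertices VH a b) (contract_edges EH a b)"
      using minor_model_contract[OF M \<open>{a, b} \<in> EH\<close>] .
    show "\<forall>x\<in>S1 \<union> T1 \<union> S2 \<union> T2. {x} \<in> contract_vertices VH a b"
      using terminals inner(5) unfolding contract_vertices_def by (metis contract_map_other image_eqI)
    show "routable (contract_vertices VH a b) (contract_edges EH a b) ((\<lambda>x. {x}) ` S1) ((\<lambda>x. {x}) ` T1) k"
      using routable_contract_path_step[OF M Rr red] inner(1,2) by blast
    show "routable (contract_vertices VH a b) (contract_edges EH a b) ((\<lambda>x. {x}) ` S2) ((\<lambda>x. {x}) ` T2) k"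
      using blue
    proof
      assume "(b, a) \<in> path_steps B"
      from routable_contract_path_step[OF M Bb this] inner(3,4)
      show ?thesis unfolding contract_vertices_def contract_edges_def contract_map_commute[of b a] by blast
    qed (use routable_contract_path_step[OF M Bb] inner(3,4) in blast)
  qed
  moreover have "\<not> good_minor V E S1 T1 S2 T2 k (contract_vertices VH a b) (contract_edges EH a b)"
    using H \<open>{a, b} \<in> EH\<close> unfolding minimal_minor_def by blast
  ultimately show False by contradiction
qed

lemma minimal_minor_no_deletable_edge:
  assumes H: "minimal_minor V E S1 T1 S2 T2 k VH EH" and e: "e \<in> EH"
    and "routable VH (EH - {e}) ((\<lambda>x. {x}) ` S1) ((\<lambda>x. {x}) ` T1) k"
    and "routable VH (EH - {e}) ((\<lambda>x. {x}) ` S2) ((\<lambda>x. {x}) ` T2) k"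
  shows False
proof -
  have good: "good_minor V E S1 T1 S2 T2 k VH EH" using H unfolding minimal_minor_def by blast
  then have M: "minor_model V E VH EH" unfolding good_minor_def by blast
  obtain X Y where XY: "e = {X, Y}" using minor_model_edgeE[OF M e] by metis
  have "good_minor V E S1 T1 S2 T2 k VH (delete_edge EH {X, Y})"
    using good assms(3,4) minor_model_subset_edges[OF M, of "EH - {e}"] XY
    unfolding good_minor_def delete_edge_def by blast
  moreover have "\<not> good_minor V E S1 T1 S2 T2 k VH (delete_edge EH {X, Y})"
    using H e XY unfolding minimal_minor_def by blast
  ultimately show False by contradiction
qed

theorem lemma2p3:
  fixes V :: "'v set" and E :: "'v set set"
    and S1 T1 S2 T2 :: "'v set" and k :: nat
    and VH :: "'v set set" and EH :: "'v set set set"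
    and R B :: "'v set list set"
  assumes G: "graph V E"
    and sub: "S1 \<subseteq> V" "T1 \<subseteq> V" "S2 \<subseteq> V" "T2 \<subseteq> V"
    and disj: "S1 \<inter> T1 = {}" "S1 \<inter> S2 = {}" "S1 \<inter> T2 = {}"
              "T1 \<inter> S2 = {}" "T1 \<inter> T2 = {}" "S2 \<inter> T2 = {}"
    and card: "card S1 = k" "card T1 = k" "card S2 = k" "card T2 = k"
    and deg: "\<forall>x \<in> S1 \<union> T1 \<union> S2 \<union> T2. degree E x = 1"
    and rout: "routable V E S1 T1 k" "routable V E S2 T2 k"
    and H: "minimal_minor V E S1 T1 S2 T2 k VH EH"
    and Rr: "routing VH EH ((\<lambda>x. {x}) ` S1) ((\<lambda>x. {x}) ` T1) k R"
    and Bb: "routing VH EH ((\<lambda>x. {x}) ` S2) ((\<lambda>x. {x}) ` T2) k B"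
  shows "\<not> (\<exists>C. red_cycle (tilde_arcs R B) C) \<and> \<not> (\<exists>C. blue_cycle (tilde_arcs R B) C)"
proof -
  have apart_RB: "path_steps R \<inter> (path_steps B \<union> (path_steps B)\<inverse>) = {}"
    using minimal_minor_no_common_edge[OF H disj(2-5) deg Rr Bb] .
  then have apart_BR: "path_steps B \<inter> (path_steps R \<union> (path_steps R)\<inverse>) = {}" by blast
  have ST1: "(\<lambda>x. {x}) ` S1 \<inter> (\<lambda>x. {x}) ` T1 = {}" using disj(1) by auto
  have ST2: "(\<lambda>x. {x}) ` S2 \<inter> (\<lambda>x. {x}) ` T2 = {}" using disj(6) by auto
  have "\<not> red_cycle (tilde_arcs R B) C" for C
  proof
    assume "red_cycle (tilde_arcs R B) C"
    then have "alt_cycle Blue Red (path_arcs Red R \<union> path_arcs Blue B) C"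
      unfolding red_cycle_def tilde_arcs_def .
    then show False
      using alt_cycle_frees_edge[OF Rr Bb ST1 apart_RB] minimal_minor_no_deletable_edge[OF H] by auto
  qed
  moreover have "\<not> blue_cycle (tilde_arcs R B) C" for C
  proof
    assume "blue_cycle (tilde_arcs R B) C"
    then have "alt_cycle Red Blue (path_arcs Blue B \<union> path_arcs Red R) C"
      unfolding blue_cycle_def tilde_arcs_def by (simp add: Un_commute)
    then show False
      using alt_cycle_frees_edge[OF Bb Rr ST2 apart_BR] minimal_minor_no_deletable_edge[OF H] by auto
  qed
  ultimately show ?thesis by blast
qed

end
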